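(* Let $G$ be a graph and $m\geq 1$. Suppose $E(G)$ is partitioned into the edge set of a DVOP$[k']$ in $G$ and a complementary edge set $E'$, and also $E(G)$ is partitioned into the edge set of a DVOP$[k'']$ in $G$ and a complementary edge set $E''$. Then $E(m\#G)$ can be partitioned into the edge sets of $|V(G)|$ paths each isomorphic to $P_{k'+m+k''}$, together with the copy of $E'$ in $G'$ and the copy of $E''$ in $G''$.
   Context: $P_k$ is the path with vertices $0,1,\dots,k$ and edges $\hat{j}$ joining $j-1$ and $j$. For a graph $G$, a DVOP$[k]$ is a family $\{p_v\}_{v\in V(G)}$ of embeddings $p_v:P_k\to G$ such that (a) $p_v(\hat{j})=p_{v'}(\hat{j'})$ implies $v=v'$ and $j=j'$, and (b) $p_v(0)=v$ for every $v$; its edge set is the union of the edge images of all $p_v$. For a graph $G$ and $m\geq 1$, $m\#G$ is the graph obtained by taking two disjoint copies $G'$ and $G''$ of $G$ and joining each vertex $v'\in V(G')$ to the corresponding vertex $v''\in V(G'')$ by a path with $m$ edges, these new paths being internally vertex-disjoint from each other and from $G'\cup G''$. *)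

theory Defs
  imports Main
begin

definition simple_graph :: "'a set \<Rightarrow> 'a set set \<Rightarrow> bool" where
  "simple_graph V E \<longleftrightarrow> (\<forall>e\<in>E. \<exists>u v. e = {u, v} \<and> u \<in> V \<and> v \<in> V \<and> u \<noteq> v)"

definition path_embedding :: "'a set \<Rightarrow> 'a set set \<Rightarrow> nat \<Rightarrow> (nat \<Rightarrow> 'a) \<Rightarrow> bool" where
  "path_embedding V E k p \<longleftrightarrow> inj_on p {0..k} \<and> (\<forall>i\<in>{0..k}. p i \<in> V)
     \<and> (\<forall>j\<in>{1..k}. {p (j - 1), p j} \<in> E)"

definition path_edge :: "(nat \<Rightarrow> 'a) \<Rightarrow> nat \<Rightarrow> 'a set" where
  "path_edge p j = {p (j - 1), p j}"

definition path_edges :: "(nat \<Rightarrow> 'a) \<Rightarrow> nat \<Rightarrow> 'a set set" where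
  "path_edges p k = path_edge p ` {1..k}"

definition dvop :: "'a set \<Rightarrow> 'a set set \<Rightarrow> nat \<Rightarrow> ('a \<Rightarrow> nat \<Rightarrow> 'a) \<Rightarrow> bool" where
  "dvop V E k P \<longleftrightarrow>
     (\<forall>v\<in>V. path_embedding V E k (P v) \<and> P v 0 = v) \<and>
     (\<forall>v\<in>V. \<forall>v'\<in>V. \<forall>j\<in>{1..k}. \<forall>j'\<in>{1..k}.
        path_edge (P v) j = path_edge (P v') j' \<longrightarrow> v = v' \<and> j = j')"

definition dvop_edges :: "'a set \<Rightarrow> nat \<Rightarrow> ('a \<Rightarrow> nat \<Rightarrow> 'a) \<Rightarrow> 'a set set" where
  "dvop_edges V k P = (\<Union>v\<in>V. path_edges (P v) k)"

text \<open>Vertices of m#G: L v (copy in G'), R v (copy in G''), Mid v i (internal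
vertex i, 0 < i < m, of the connecting path of v).\<close>
datatype 'a sharp_vert = L 'a | R 'a | Mid 'a nat

definition sharp_walk :: "nat \<Rightarrow> 'a \<Rightarrow> nat \<Rightarrow> 'a sharp_vert" where
  "sharp_walk m v i = (if i = 0 then L v else if i = m then R v else Mid v i)"

definition sharp_verts :: "'a set \<Rightarrow> nat \<Rightarrow> 'a sharp_vert set" where
  "sharp_verts V m = L ` V \<union> R ` V \<union> {Mid v i | v i. v \<in> V \<and> 0 < i \<and> i < m}"

definition copyL :: "'a set set \<Rightarrow> 'a sharp_vert set set" where
  "copyL F = (\<lambda>e. L ` e) ` F"

definition copyR :: "'a set set \<Rightarrow> 'a sharp_vert set set" where
  "copyR F = (\<lambda>e. R ` e) ` F"

definition sharp_edges :: "'a set \<Rightarrow> 'a set set \<Rightarrow> nat \<Rightarrow> 'a sharp_vert set set" where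
  "sharp_edges V E m = copyL E \<union> copyR E \<union> (\<Union>v\<in>V. path_edges (sharp_walk m v) m)"

end

theory Submission
  imports Defs
begin

text \<open>For a vertex v, run backwards along the DVOP[k1] path of v in G', cross to G''
along the connecting path of v, and continue along the DVOP[k2] path of v in G''. The edges of m#G fall into three classes (inside G', inside G'',
on a connecting path) that never meet, and within each class the paths for distinct vertices
use distinct edges: in G' and G'' because DVOP paths have pairwise distinct edge images, on
the connecting paths because these are vertex-disjoint. What the paths leave uncovered in G'
is exactly the copy of E', and in G'' the copy of E''.\<close>

lemma path_embedding_altdef:
  "path_embedding V E k p \<longleftrightarrow> inj_on p {0..k} \<and> p ` {0..k} \<subseteq> V \<and> path_edges p k \<subseteq> E"
  by (auto simp: path_embedding_def path_edges_def path_edge_def)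

lemma path_edge_nonempty: "x \<in> path_edges p k \<Longrightarrow> x \<noteq> {}"
  by (auto simp: path_edges_def path_edge_def)

lemma path_edges_subset_Pow: "path_edges p k \<subseteq> Pow (p ` {0..k})"
  by (auto simp: path_edges_def path_edge_def)

lemma path_edges_disjointI:
  assumes "p ` {0..k} \<inter> q ` {0..l} = {}"
  shows "path_edges p k \<inter> path_edges q l = {}"
proof -
  have "x = {}" if "x \<in> path_edges p k" "x \<in> path_edges q l" for x
    using that path_edges_subset_Pow[of p k] path_edges_subset_Pow[of q l] assms by blast
  then show ?thesis
    using path_edge_nonempty by blast
qed

lemma path_edges_comp: "path_edges (f \<circ> p) k = (`) f ` path_edges p k"
  by (simp add: path_edges_def path_edge_def image_image)

lemma path_embedding_comp:
  assumes "inj_on f V" and "path_embedding V E k p"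
  shows "path_embedding (f ` V) ((`) f ` E) k (f \<circ> p)"
  using assms by (auto simp: path_embedding_altdef path_edges_comp intro: comp_inj_on inj_on_subset)

lemma path_embedding_mono:
  "path_embedding V E k p \<Longrightarrow> V \<subseteq> V' \<Longrightarrow> E \<subseteq> E' \<Longrightarrow> path_embedding V' E' k p"
  by (auto simp: path_embedding_def)

lemma image_reflect_atLeastAtMost_nat: "(\<lambda>i. a + b - i) ` {a..b} = {a..b :: nat}"
proof (intro equalityI subsetI)
  fix i :: nat assume "i \<in> {a..b}"
  then show "i \<in> (\<lambda>i. a + b - i) ` {a..b}"
    by (intro image_eqI[of _ _ "a + b - i"]) auto
qed auto

definition path_rev :: "(nat \<Rightarrow> 'a) \<Rightarrow> nat \<Rightarrow> nat \<Rightarrow> 'a" where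
  "path_rev p k i = p (k - i)"

lemma path_edges_rev: "path_edges (path_rev p k) k = path_edges p k"
proof -
  have edge: "path_edge (path_rev p k) j = path_edge p (Suc k - j)" if "j \<in> {1..k}" for j
    using that by (auto simp: path_edge_def path_rev_def Suc_diff_le)
  have reflect: "(\<lambda>j. Suc k - j) ` {1..k} = {1..k}"
    using image_reflect_atLeastAtMost_nat[of 1 k] by simp
  have "path_edges (path_rev p k) k = path_edge p ` (\<lambda>j. Suc k - j) ` {1..k}"
    unfolding path_edges_def image_image by (rule image_cong[OF refl edge])
  then show ?thesis
    by (simp only: reflect path_edges_def)
qed

lemma path_embedding_rev:
  assumes "path_embedding V E k p"
  shows "path_embedding V E k (path_rev p k)"
proof -
  have shift: "inj_on (\<lambda>i. k - i) {0..k}"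
    by (auto simp: inj_on_def)
  have reflect: "(\<lambda>i. k - i) ` {0..k} = {0..k}"
    using image_reflect_atLeastAtMost_nat[of 0 k] by simp
  have rev: "path_rev p k = p \<circ> (\<lambda>i. k - i)"
    by (auto simp: path_rev_def)
  have "inj_on (path_rev p k) {0..k}"
    unfolding rev using assms shift reflect by (auto simp: path_embedding_def intro: comp_inj_on)
  moreover have "path_rev p k ` {0..k} = p ` {0..k}"
    unfolding rev image_comp[symmetric] reflect ..
  ultimately show ?thesis
    using assms by (simp add: path_embedding_altdef path_edges_rev)
qed

definition path_append :: "(nat \<Rightarrow> 'a) \<Rightarrow> nat \<Rightarrow> (nat \<Rightarrow> 'a) \<Rightarrow> nat \<Rightarrow> 'a" where
  "path_append p k q i = (if i \<le> k then p i else q (i - k))"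

lemma path_edges_append:
  assumes "p k = q 0"
  shows "path_edges (path_append p k q) (k + l) = path_edges p k \<union> path_edges q l"
proof -
  let ?r = "path_append p k q"
  have low: "path_edge ?r j = path_edge p j" if "j \<in> {1..k}" for j
    using that by (auto simp: path_edge_def path_append_def)
  have high: "path_edge ?r (j + k) = path_edge q j" if "j \<in> {1..l}" for j
    using that assms by (cases "j = 1") (auto simp: path_edge_def path_append_def)
  have "{1..k + l} = {1..k} \<union> (\<lambda>j. j + k) ` {1..l}"
    by auto
  then have "path_edges ?r (k + l) = path_edge ?r ` {1..k} \<union> (\<lambda>j. path_edge ?r (j + k)) ` {1..l}"
    by (simp only: path_edges_def image_Un image_image)
  also have "\<dots> = path_edges p k \<union> path_edges q l"
  proof -
    have "path_edge ?r ` {1..k} = path_edge p ` {1..k}"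
      by (rule image_cong[OF refl low])
    moreover have "(\<lambda>j. path_edge ?r (j + k)) ` {1..l} = path_edge q ` {1..l}"
      by (rule image_cong[OF refl high])
    ultimately show ?thesis
      by (simp only: path_edges_def)
  qed
  finally show ?thesis .
qed

lemma image_path_append_prefix: "path_append p k q ` {0..k} = p ` {0..k}"
  by (rule image_cong) (simp_all add: path_append_def)

lemma image_path_append_suffix: "path_append p k q ` (\<lambda>i. i + k) ` {1..l} = q ` {1..l}"
  unfolding image_image by (rule image_cong) (simp_all add: path_append_def)

lemma image_path_append:
  "path_append p k q ` {0..k + l} = p ` {0..k} \<union> q ` {1..l}"
proof -
  have "{0..k + l} = {0..k} \<union> (\<lambda>i. i + k) ` {1..l}"
    by auto
  then show ?thesis
    by (simp only: image_Un image_path_append_prefix image_path_append_suffix)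
qed

lemma path_embedding_append:
  assumes p: "path_embedding V E k p" and q: "path_embedding V E l q"
    and join: "p k = q 0" and disjoint: "p ` {0..k} \<inter> q ` {1..l} = {}"
  shows "path_embedding V E (k + l) (path_append p k q)"
proof -
  let ?r = "path_append p k q"
  have split: "{0..k + l} = {0..k} \<union> (\<lambda>i. i + k) ` {1..l}"
    by auto
  have "inj_on ?r {0..k}"
    using p by (auto simp: path_embedding_def path_append_def intro: inj_on_cong[THEN iffD1])
  moreover have "inj_on ?r ((\<lambda>i. i + k) ` {1..l})"
  proof (rule inj_on_imageI)
    have "inj_on q {1..l}"
      using q by (auto simp: path_embedding_def intro: inj_on_subset)
    then show "inj_on (?r \<circ> (\<lambda>i. i + k)) {1..l}"
      by (rule inj_on_cong[THEN iffD1, rotated]) (simp add: path_append_def)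
  qed
  moreover have "?r ` {0..k} \<inter> ?r ` (\<lambda>i. i + k) ` {1..l} = {}"
    using disjoint by (simp only: image_path_append_prefix image_path_append_suffix)
  ultimately have "inj_on ?r {0..k + l}"
    unfolding split inj_on_Un by auto
  moreover have "?r ` {0..k + l} \<subseteq> V"
    using p q by (auto simp: image_path_append path_embedding_altdef)
  moreover have "path_edges ?r (k + l) \<subseteq> E"
    using p q by (simp add: path_edges_append[of p k q l, OF join] path_embedding_altdef)
  ultimately show ?thesis
    unfolding path_embedding_altdef by blast
qed

lemma dvop_path_embedding: "dvop V E k P \<Longrightarrow> v \<in> V \<Longrightarrow> path_embedding V E k (P v)"
  by (simp add: dvop_def)

lemma dvop_path_start: "dvop V E k P \<Longrightarrow> v \<in> V \<Longrightarrow> P v 0 = v"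
  by (simp add: dvop_def)

lemma dvop_path_edges_disjoint:
  assumes "dvop V E k P" and "v \<in> V" and "v' \<in> V" and "v \<noteq> v'"
  shows "path_edges (P v) k \<inter> path_edges (P v') k = {}"
  using assms unfolding dvop_def path_edges_def by blast

lemma simple_graph_edge_nonempty: "simple_graph V E \<Longrightarrow> {} \<notin> E"
  by (auto simp: simple_graph_def)

lemma copyL_Int: "copyL (A \<inter> B) = copyL A \<inter> copyL B"
  unfolding copyL_def by (rule image_Int, rule inj_on_image) (simp add: inj_on_def)

lemma copyR_Int: "copyR (A \<inter> B) = copyR A \<inter> copyR B"
  unfolding copyR_def by (rule image_Int, rule inj_on_image) (simp add: inj_on_def)

lemma copyL_Un: "copyL (A \<union> B) = copyL A \<union> copyL B"
  by (simp add: copyL_def image_Un)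

lemma copyR_Un: "copyR (A \<union> B) = copyR A \<union> copyR B"
  by (simp add: copyR_def image_Un)

lemma copyL_Int_copyR:
  assumes "{} \<notin> A"
  shows "copyL A \<inter> copyR B = {}"
proof (intro equals0I)
  fix x assume "x \<in> copyL A \<inter> copyR B"
  then obtain a b where "a \<in> A" "x = L ` a" "x = R ` b"
    unfolding copyL_def copyR_def by blast
  moreover obtain u where "u \<in> a"
    using assms \<open>a \<in> A\<close> by fastforce
  ultimately show False
    by blast
qed

lemma sharp_walk_embedding:
  assumes "v \<in> V"
  shows "path_embedding (sharp_verts V m) (sharp_edges V E m) m (sharp_walk m v)"
  using assms unfolding path_embedding_altdef
  by (auto simp: inj_on_def sharp_walk_def sharp_verts_def sharp_edges_def split: if_splits)

lemma path_edges_sharp_walk_disjoint: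
  "v \<noteq> v' \<Longrightarrow> path_edges (sharp_walk m v) m \<inter> path_edges (sharp_walk m v') m = {}"
  by (rule path_edges_disjointI) (auto simp: sharp_walk_def split: if_splits)

lemma copyL_Int_sharp_walk: "copyL F \<inter> path_edges (sharp_walk m v) m = {}"
proof (intro equals0I)
  fix x assume "x \<in> copyL F \<inter> path_edges (sharp_walk m v) m"
  then obtain a j where "x = L ` a" "j \<in> {1..m}" "x = path_edge (sharp_walk m v) j"
    unfolding copyL_def path_edges_def by blast
  moreover have "sharp_walk m v j \<notin> range L"
    using \<open>j \<in> {1..m}\<close> by (auto simp: sharp_walk_def)
  ultimately show False
    by (auto simp: path_edge_def)
qed

lemma copyR_Int_sharp_walk: "copyR F \<inter> path_edges (sharp_walk m v) m = {}"
proof (intro equals0I)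
  fix x assume "x \<in> copyR F \<inter> path_edges (sharp_walk m v) m"
  then obtain a j where "x = R ` a" "j \<in> {1..m}" "x = path_edge (sharp_walk m v) j"
    unfolding copyR_def path_edges_def by blast
  moreover have "sharp_walk m v (j - 1) \<notin> range R"
    using \<open>j \<in> {1..m}\<close> by (auto simp: sharp_walk_def)
  ultimately show False
    by (auto simp: path_edge_def)
qed

definition sharp_path ::
    "nat \<Rightarrow> 'a \<Rightarrow> nat \<Rightarrow> (nat \<Rightarrow> 'a) \<Rightarrow> nat \<Rightarrow> (nat \<Rightarrow> 'a) \<Rightarrow> nat \<Rightarrow> 'a sharp_vert" where
  "sharp_path m v k1 p k2 q =
     path_append (path_append (L \<circ> path_rev p k1) k1 (sharp_walk m v)) (k1 + m) (R \<circ> q)"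

lemma sharp_path_joins:
  assumes "0 < m" and "p 0 = v" and "q 0 = v"
  shows "(L \<circ> path_rev p k1) k1 = sharp_walk m v 0"
    and "path_append (L \<circ> path_rev p k1) k1 (sharp_walk m v) (k1 + m) = (R \<circ> q) 0"
  using assms by (simp_all add: path_rev_def path_append_def sharp_walk_def)

lemma path_edges_sharp_path:
  assumes "0 < m" and "p 0 = v" and "q 0 = v"
  shows "path_edges (sharp_path m v k1 p k2 q) (k1 + m + k2) =
    copyL (path_edges p k1) \<union> path_edges (sharp_walk m v) m \<union> copyR (path_edges q k2)"
  unfolding sharp_path_def copyL_def copyR_def
  using path_edges_append[of "L \<circ> path_rev p k1" k1 "sharp_walk m v" m,
      OF sharp_path_joins(1)[of m p v q k1, OF assms]]
    path_edges_append[of "path_append (L \<circ> path_rev p k1) k1 (sharp_walk m v)" "k1 + m" "R \<circ> q" k2,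
      OF sharp_path_joins(2)[of m p v q k1, OF assms]]
  by (simp add: path_edges_comp path_edges_rev)

lemma sharp_path_embedding:
  assumes "0 < m" and "v \<in> V"
    and p: "path_embedding V E k1 p" "p 0 = v" and q: "path_embedding V E k2 q" "q 0 = v"
  shows "path_embedding (sharp_verts V m) (sharp_edges V E m) (k1 + m + k2) (sharp_path m v k1 p k2 q)"
proof -
  let ?V = "sharp_verts V m" and ?E = "sharp_edges V E m"
  have "inj_on L V" "inj_on R V"
    by (simp_all add: inj_on_def)
  moreover have "L ` V \<subseteq> ?V" "R ` V \<subseteq> ?V" "(`) L ` E \<subseteq> ?E" "(`) R ` E \<subseteq> ?E"
    by (auto simp: sharp_verts_def sharp_edges_def copyL_def copyR_def)
  ultimately have left: "path_embedding ?V ?E k1 (L \<circ> path_rev p k1)"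
    and right: "path_embedding ?V ?E k2 (R \<circ> q)"
    using p(1) q(1) by (meson path_embedding_comp path_embedding_rev path_embedding_mono)+
  note joins = sharp_path_joins[of m p v q k1, OF assms(1) p(2) q(2)]
  have "(L \<circ> path_rev p k1) ` {0..k1} \<inter> sharp_walk m v ` {1..m} = {}"
    by (auto simp: sharp_walk_def)
  then have middle: "path_embedding ?V ?E (k1 + m) (path_append (L \<circ> path_rev p k1) k1 (sharp_walk m v))"
    by (rule path_embedding_append[OF left sharp_walk_embedding[OF \<open>v \<in> V\<close>] joins(1)])
  have "v \<notin> q ` {1..k2}"
  proof
    assume "v \<in> q ` {1..k2}"
    then obtain j where "j \<in> {1..k2}" "q j = q 0"
      using q(2) by auto
    then show False
      using q(1) by (auto simp: path_embedding_def dest: inj_onD)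
  qed
  then have "path_append (L \<circ> path_rev p k1) k1 (sharp_walk m v) ` {0..k1 + m} \<inter> (R \<circ> q) ` {1..k2} = {}"
    unfolding image_path_append by (auto simp: sharp_walk_def)
  then show ?thesis
    unfolding sharp_path_def by (rule path_embedding_append[OF middle right joins(2)])
qed

lemma sharp_path_edges_partition:
  assumes "simple_graph V E" and "0 < m"
    and P1: "dvop V E k1 P1" "dvop_edges V k1 P1 \<inter> E1 = {}" "dvop_edges V k1 P1 \<union> E1 = E"
    and P2: "dvop V E k2 P2" "dvop_edges V k2 P2 \<inter> E2 = {}" "dvop_edges V k2 P2 \<union> E2 = E"
  defines "F \<equiv> \<lambda>v. path_edges (sharp_path m v k1 (P1 v) k2 (P2 v)) (k1 + m + k2)"
  shows "\<And>v v'. v \<in> V \<Longrightarrow> v' \<in> V \<Longrightarrow> v \<noteq> v' \<Longrightarrow> F v \<inter> F v' = {}"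
    and "\<And>v. v \<in> V \<Longrightarrow> F v \<inter> copyL E1 = {}"
    and "\<And>v. v \<in> V \<Longrightarrow> F v \<inter> copyR E2 = {}"
    and "copyL E1 \<inter> copyR E2 = {}"
    and "(\<Union>v\<in>V. F v) \<union> copyL E1 \<union> copyR E2 = sharp_edges V E m"
proof -
  let ?A = "\<lambda>v. path_edges (P1 v) k1" and ?W = "\<lambda>v. path_edges (sharp_walk m v) m"
    and ?B = "\<lambda>v. path_edges (P2 v) k2"
  have F: "F v = copyL (?A v) \<union> ?W v \<union> copyR (?B v)" if "v \<in> V" for v
    unfolding F_def using \<open>0 < m\<close> dvop_path_start[OF P1(1) that] dvop_path_start[OF P2(1) that]
    by (rule path_edges_sharp_path)
  have nonempty: "{} \<notin> ?A v" "{} \<notin> E1" for v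
    using path_edge_nonempty[of "{}"] simple_graph_edge_nonempty[OF assms(1)] P1(3) by auto
  have walk: "copyL X \<inter> ?W v = {}" "copyR X \<inter> ?W v = {}"
    "?W v \<inter> copyL X = {}" "?W v \<inter> copyR X = {}" for X v
    using copyL_Int_sharp_walk[of X m v] copyR_Int_sharp_walk[of X m v] by (simp_all add: Int_commute)
  have cross: "copyL (?A v) \<inter> copyR X = {}" "copyR X \<inter> copyL (?A v) = {}"
    "copyL E1 \<inter> copyR X = {}" "copyR X \<inter> copyL E1 = {}" for v X
    using nonempty by (simp_all add: copyL_Int_copyR Int_commute[of "copyR X"])
  show "F v \<inter> F v' = {}" if "v \<in> V" "v' \<in> V" "v \<noteq> v'" for v v'
  proof -
    have "copyL (?A v) \<inter> copyL (?A v') = {}" "copyR (?B v) \<inter> copyR (?B v') = {}"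
      unfolding copyL_Int[symmetric] copyR_Int[symmetric]
      using dvop_path_edges_disjoint[OF P1(1) that] dvop_path_edges_disjoint[OF P2(1) that]
      by (simp_all add: copyL_def copyR_def)
    then show ?thesis
      unfolding F[OF that(1)] F[OF that(2)] Int_Un_distrib Int_Un_distrib2 Un_empty
      by (simp add: path_edges_sharp_walk_disjoint[OF \<open>v \<noteq> v'\<close>] walk cross)
  qed
  show "F v \<inter> copyL E1 = {}" if "v \<in> V" for v
  proof -
    have "copyL (?A v) \<inter> copyL E1 = {}"
      using P1(2) \<open>v \<in> V\<close> unfolding copyL_Int[symmetric] dvop_edges_def
      by (auto simp: copyL_def)
    then show ?thesis
      unfolding F[OF that] Int_Un_distrib2 Un_empty by (simp add: walk cross)
  qed
  show "F v \<inter> copyR E2 = {}" if "v \<in> V" for v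
  proof -
    have "copyR (?B v) \<inter> copyR E2 = {}"
      using P2(2) \<open>v \<in> V\<close> unfolding copyR_Int[symmetric] dvop_edges_def
      by (auto simp: copyR_def)
    then show ?thesis
      unfolding F[OF that] Int_Un_distrib2 Un_empty by (simp add: walk cross)
  qed
  show "copyL E1 \<inter> copyR E2 = {}"
    by (rule cross(3))
  have "(\<Union>v\<in>V. F v) = (\<Union>v\<in>V. copyL (?A v) \<union> ?W v \<union> copyR (?B v))"
    by (rule SUP_cong[OF refl F])
  also have "\<dots> = copyL (dvop_edges V k1 P1) \<union> (\<Union>v\<in>V. ?W v) \<union> copyR (dvop_edges V k2 P2)"
    by (simp add: UN_Un_distrib dvop_edges_def copyL_def copyR_def image_UN)
  moreover have "copyL E = copyL (dvop_edges V k1 P1) \<union> copyL E1"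
    by (simp add: P1(3)[symmetric] copyL_Un)
  moreover have "copyR E = copyR (dvop_edges V k2 P2) \<union> copyR E2"
    by (simp add: P2(3)[symmetric] copyR_Un)
  ultimately show "(\<Union>v\<in>V. F v) \<union> copyL E1 \<union> copyR E2 = sharp_edges V E m"
    by (simp add: sharp_edges_def Un_ac)
qed

theorem lemma7:
  fixes V :: "'a set" and E E1 E2 :: "'a set set"
    and m k1 k2 :: nat and P1 P2 :: "'a \<Rightarrow> nat \<Rightarrow> 'a"
  assumes "finite V" and "simple_graph V E" and "m \<ge> 1"
    and "dvop V E k1 P1" and "dvop_edges V k1 P1 \<inter> E1 = {}" and "dvop_edges V k1 P1 \<union> E1 = E"
    and "dvop V E k2 P2" and "dvop_edges V k2 P2 \<inter> E2 = {}" and "dvop_edges V k2 P2 \<union> E2 = E"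
  shows "\<exists>(I :: nat set) Q. finite I \<and> card I = card V
    \<and> (\<forall>i\<in>I. path_embedding (sharp_verts V m) (sharp_edges V E m) (k1 + m + k2) (Q i))
    \<and> (\<forall>i\<in>I. \<forall>i'\<in>I. i \<noteq> i' \<longrightarrow>
          path_edges (Q i) (k1 + m + k2) \<inter> path_edges (Q i') (k1 + m + k2) = {})
    \<and> (\<forall>i\<in>I. path_edges (Q i) (k1 + m + k2) \<inter> copyL E1 = {}
            \<and> path_edges (Q i) (k1 + m + k2) \<inter> copyR E2 = {})
    \<and> copyL E1 \<inter> copyR E2 = {}
    \<and> (\<Union>i\<in>I. path_edges (Q i) (k1 + m + k2)) \<union> copyL E1 \<union> copyR E2 = sharp_edges V E m"
proof -
  let ?I = "{0..<card V}" and ?K = "k1 + m + k2"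
  have "0 < m"
    using \<open>m \<ge> 1\<close> by simp
  obtain g where "bij_betw g ?I V"
    using ex_bij_betw_nat_finite[OF \<open>finite V\<close>] ..
  then have g: "g ` ?I = V" "inj_on g ?I"
    by (simp_all add: bij_betw_def)
  define Q where "Q v = sharp_path m v k1 (P1 v) k2 (P2 v)" for v
  have embedding: "path_embedding (sharp_verts V m) (sharp_edges V E m) ?K (Q v)" if "v \<in> V" for v
    unfolding Q_def using \<open>0 < m\<close> that
      dvop_path_embedding[OF assms(4) that] dvop_path_start[OF assms(4) that]
      dvop_path_embedding[OF assms(7) that] dvop_path_start[OF assms(7) that]
    by (rule sharp_path_embedding)
  note partition = sharp_path_edges_partition[OF assms(2) \<open>0 < m\<close> assms(4-9), folded Q_def]
  have "(\<Union>i\<in>?I. path_edges (Q (g i)) ?K) = (\<Union>v\<in>g ` ?I. path_edges (Q v) ?K)"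
    by simp
  then have "(\<Union>i\<in>?I. path_edges (Q (g i)) ?K) = (\<Union>v\<in>V. path_edges (Q v) ?K)"
    by (simp only: g(1))
  moreover have "g i \<in> V" if "i \<in> ?I" for i
    using g(1) that by blast
  moreover have "g i \<noteq> g i'" if "i \<in> ?I" "i' \<in> ?I" "i \<noteq> i'" for i i'
    using g(2) that by (auto dest: inj_onD)
  ultimately show ?thesis
    using embedding partition
    by (intro exI[of _ ?I] exI[of _ "Q \<circ> g"] conjI ballI impI) simp_all
qed

end
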